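(* Let $K$, $I$, $I'$, $\lambda_0$ and $f_2^{\mathrm{tr}}$ be as in the context, and suppose $\mathbb P(I\cap I'\ne\emptyset)<1$. Then $\sup_{\mathrm{tr}\in\mathbb N}\mathrm{tr}\,f_2^{\mathrm{tr}}(\lambda)<\infty$ for all $\lambda<\lambda_0$.
   Context: Let $K$ be a probability distribution on $\mathbb N=\{1,2,\dots\}$ (with $\lim_{n\to\infty}\log K(n)/\log n=-(1+\alpha)$ for some $\alpha\in[0,\infty)$). Let $I$ and $I'$ be the sets of renewal times in $\mathbb N$ (excluding $0$) of two independent renewal processes started at $0$ with inter-arrival law $K$, and $\lambda_0:=-\log\mathbb P(I\cap I'\ne\emptyset)$. For $\mathrm{tr}\in\mathbb N$ let $K^{\mathrm{tr}}(n)=K(n)$ for $1\le n\le\mathrm{tr}-1$, $K^{\mathrm{tr}}(\mathrm{tr})=\sum_{m\ge\mathrm{tr}}K(m)$, $K^{\mathrm{tr}}(n)=0$ for $n>\mathrm{tr}$. Let $J,J'\subseteq\mathbb N_0$ be the renewal sets (containing $0$) of two independent renewal processes started at $0$ with inter-arrival law $K^{\mathrm{tr}}$, and define $f_2^{\mathrm{tr}}(\lambda):=\lim_{n\to\infty}\frac1n\log E\big[\exp\big(\lambda\sum_{k=0}^{n-1}1_{\{k\in J\cap J'\}}\big)\big]$. *)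

theory Defs
  imports "HOL-Probability.Probability"
begin

text \<open>Renewal sets. A renewal process with inter-arrival law K is modelled by an
  i.i.d. stream of inter-arrival times (law K); the renewal times are the partial sums.\<close>

definition renewal_set_pos :: "nat stream \<Rightarrow> nat set" where
  "renewal_set_pos \<omega> = {sum_list (stake (Suc k) \<omega>) | k. True}"

definition renewal_set0 :: "nat stream \<Rightarrow> nat set" where
  "renewal_set0 \<omega> = {sum_list (stake k \<omega>) | k. True}"

definition two_renewals :: "nat pmf \<Rightarrow> (nat stream \<times> nat stream) measure" where
  "two_renewals K = stream_space (measure_pmf K) \<Otimes>\<^sub>M stream_space (measure_pmf K)"

definition p_intersect :: "nat pmf \<Rightarrow> real" where
  "p_intersect K = measure (two_renewals K)
     {\<omega> \<in> space (two_renewals K). renewal_set_pos (fst \<omega>) \<inter> renewal_set_pos (snd \<omega>) \<noteq> {}}"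

definition lambda0 :: "nat pmf \<Rightarrow> real" where
  "lambda0 K = - ln (p_intersect K)"

definition trunc_pmf :: "nat pmf \<Rightarrow> nat \<Rightarrow> nat pmf" where
  "trunc_pmf K tr = map_pmf (\<lambda>n. min n tr) K"

definition f2 :: "nat pmf \<Rightarrow> nat \<Rightarrow> real \<Rightarrow> real" where
  "f2 K tr lam = lim (\<lambda>n. ln (integral\<^sup>L (two_renewals (trunc_pmf K tr))
        (\<lambda>\<omega>. exp (lam * real (card {k. k < n \<and> k \<in> renewal_set0 (fst \<omega>) \<inter> renewal_set0 (snd \<omega>)}))))
        / real n)"

end

theory Submission
  imports Defs
begin

text \<open>
  Let W n be the moment generating function of the number of contacts (common renewals)
  in [0, n) for the truncated law. Cutting at the first contact at or after time n and
  restarting both renewal processes there, which is a strong Markov property at common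
  renewal times, gives a renewal equation
  W (n + m) = A + (\<Sum>t<m. B t * W (m - t)) with A + (\<Sum>t<m. B t) = W n.
  Hence W is submultiplicative for \<lambda> \<ge> 0 and supermultiplicative for \<lambda> \<le> 0,
  and the limit f2 = lim ln (W n) / n exists by Fekete's lemma.

  For n = 1 the weight B t is e^\<lambda> times the probability that the first contact after
  time 0 happens at time t + 1. Before time tr the truncated processes agree with the
  original ones, so contacts before tr have total weight at most e^\<lambda> P(I \<inter> I' \<noteq> {}),
  and all contacts together at most e^\<lambda>. Damping the contact at time t + 1 by
  exp (- C (t + 1) / tr), the total weight drops to e^\<lambda> (P(I \<inter> I' \<noteq> {}) + e^-C),
  which is below 1 for large C as soon as \<lambda> < \<lambda>0. Induction along the renewal
  equation then yields W n \<le> c exp (C n / tr), that is tr * f2 \<le> C for every tr.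
\<close>

section \<open>Independence of prefix and suffix of i.i.d. streams\<close>

abbreviation iid_streams :: "'a pmf \<Rightarrow> 'a stream measure" where
  "iid_streams M \<equiv> stream_space (measure_pmf M)"

abbreviation iid_pairs :: "'a pmf \<Rightarrow> ('a stream \<times> 'a stream) measure" where
  "iid_pairs M \<equiv> iid_streams M \<Otimes>\<^sub>M iid_streams M"

lemma prob_space_iid_streams: "prob_space (iid_streams M)"
  by (rule prob_space.prob_space_stream_space) (rule measure_pmf.prob_space_axioms)

lemma prob_space_iid_pairs: "prob_space (iid_pairs M)"
  by (intro prob_space_pair prob_space_iid_streams)

lemma space_iid_streams [simp]: "space (iid_streams M) = UNIV"
  by (simp add: space_stream_space)

lemma space_iid_pairs [simp]: "space (iid_pairs M) = UNIV"
  by (simp add: space_pair_measure)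

lemma sets_iid_pairs_Collect: "Measurable.pred (iid_pairs M) P \<Longrightarrow> {\<omega>. P \<omega>} \<in> sets (iid_pairs M)"
  by (drule predE) simp

lemma measurable_stake_iid [measurable]:
  "stake i \<in> measurable (iid_streams M) (count_space (UNIV :: 'a::countable list set))"
  by measurable

lemma measurable_stake_pair [measurable]:
  fixes G :: "'a::countable list \<times> 'a list \<Rightarrow> ennreal"
  shows "(\<lambda>\<omega>. G (stake i (fst \<omega>), stake j (snd \<omega>))) \<in> borel_measurable (iid_pairs M)"
proof -
  have "G \<in> borel_measurable (count_space UNIV \<Otimes>\<^sub>M count_space UNIV)"
    by (simp add: pair_measure_countable)
  moreover have "(\<lambda>\<omega>. (stake i (fst \<omega>), stake j (snd \<omega>)))
      \<in> measurable (iid_pairs M) (count_space UNIV \<Otimes>\<^sub>M count_space UNIV)"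
    by measurable
  ultimately show ?thesis
    using measurable_compose by (auto simp: o_def)
qed

lemma nn_integral_stake_sdrop:
  fixes \<Phi> :: "'a::countable list \<Rightarrow> 'a stream \<Rightarrow> ennreal"
  assumes "case_prod \<Phi> \<in> borel_measurable (count_space UNIV \<Otimes>\<^sub>M iid_streams M)"
  shows "(\<integral>\<^sup>+\<omega>. \<Phi> (stake i \<omega>) (sdrop i \<omega>) \<partial>iid_streams M)
       = (\<integral>\<^sup>+\<omega>. \<integral>\<^sup>+\<eta>. \<Phi> (stake i \<omega>) \<eta> \<partial>iid_streams M \<partial>iid_streams M)"
  using assms
proof (induction i arbitrary: \<Phi>)
  case 0
  interpret prob_space "iid_streams M" by (rule prob_space_iid_streams)
  have "\<Phi> [] \<in> borel_measurable (iid_streams M)"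
    using 0 by measurable
  then show ?case
    using emeasure_space_1 by simp
next
  case (Suc i)
  note Suc.prems [measurable]
  have "(\<integral>\<^sup>+\<omega>. \<Phi> (stake (Suc i) \<omega>) (sdrop (Suc i) \<omega>) \<partial>iid_streams M)
      = (\<integral>\<^sup>+x. \<integral>\<^sup>+\<omega>. \<Phi> (x # stake i \<omega>) (sdrop i \<omega>) \<partial>iid_streams M \<partial>M)"
    by (subst prob_space.nn_integral_stream_space[OF measure_pmf.prob_space_axioms]) auto
  also have "\<dots> = (\<integral>\<^sup>+x. \<integral>\<^sup>+\<omega>. \<integral>\<^sup>+\<eta>. \<Phi> (x # stake i \<omega>) \<eta> \<partial>iid_streams M \<partial>iid_streams M \<partial>M)"
    by (intro nn_integral_cong Suc.IH) measurable
  also have "\<dots> = (\<integral>\<^sup>+\<omega>. \<integral>\<^sup>+\<eta>. \<Phi> (stake (Suc i) \<omega>) \<eta> \<partial>iid_streams M \<partial>iid_streams M)"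
    by (subst prob_space.nn_integral_stream_space[OF measure_pmf.prob_space_axioms]) auto
  finally show ?case .
qed

lemma nn_integral_stake_sdrop_mult:
  fixes g :: "'a::countable list \<Rightarrow> ennreal"
  assumes [measurable]: "k \<in> borel_measurable (iid_streams M)"
  shows "(\<integral>\<^sup>+\<omega>. g (stake i \<omega>) * k (sdrop i \<omega>) \<partial>iid_streams M)
       = (\<integral>\<^sup>+\<omega>. g (stake i \<omega>) \<partial>iid_streams M) * integral\<^sup>N (iid_streams M) k"
proof -
  have "(\<integral>\<^sup>+\<omega>. g (stake i \<omega>) * k (sdrop i \<omega>) \<partial>iid_streams M)
      = (\<integral>\<^sup>+\<omega>. \<integral>\<^sup>+\<eta>. g (stake i \<omega>) * k \<eta> \<partial>iid_streams M \<partial>iid_streams M)"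
    by (rule nn_integral_stake_sdrop[where \<Phi>="\<lambda>l \<eta>. g l * k \<eta>"]) measurable
  also have "\<dots> = (\<integral>\<^sup>+\<omega>. g (stake i \<omega>) * integral\<^sup>N (iid_streams M) k \<partial>iid_streams M)"
    by (intro nn_integral_cong nn_integral_cmult) measurable
  finally show ?thesis
    by (simp add: nn_integral_multc)
qed

lemma nn_integral_iid_pairs_stake_sdrop:
  fixes G :: "'a::countable list \<times> 'a list \<Rightarrow> ennreal"
  assumes h [measurable]: "h \<in> borel_measurable (iid_pairs M)"
  shows "(\<integral>\<^sup>+\<omega>. G (stake i (fst \<omega>), stake j (snd \<omega>)) * h (sdrop i (fst \<omega>), sdrop j (snd \<omega>)) \<partial>iid_pairs M)
       = (\<integral>\<^sup>+\<omega>. G (stake i (fst \<omega>), stake j (snd \<omega>)) \<partial>iid_pairs M) * integral\<^sup>N (iid_pairs M) h"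
proof -
  interpret prob_space "iid_streams M" by (rule prob_space_iid_streams)
  define Gb where "Gb l = (\<integral>\<^sup>+b. G (l, stake j b) \<partial>iid_streams M)" for l
  define H where "H \<eta> = (\<integral>\<^sup>+\<eta>'. h (\<eta>, \<eta>') \<partial>iid_streams M)" for \<eta>
  define \<Psi> where "\<Psi> l \<eta> = (\<integral>\<^sup>+b. G (l, stake j b) * h (\<eta>, sdrop j b) \<partial>iid_streams M)" for l \<eta>
  have [measurable]: "(\<lambda>(a, b). G (stake i a, stake j b)) \<in> borel_measurable (iid_pairs M)"
    using measurable_stake_pair[of G i j M] by (simp add: case_prod_beta')
  have [measurable]: "H \<in> borel_measurable (iid_streams M)"
    unfolding H_def by measurable
  have "(\<lambda>((l, \<eta>), b). G (l, stake j b))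
      \<in> borel_measurable ((count_space UNIV \<Otimes>\<^sub>M iid_streams M) \<Otimes>\<^sub>M iid_streams M)"
    using measurable_compose[of "\<lambda>x. (fst (fst x), stake j (snd x))" _ "count_space UNIV \<Otimes>\<^sub>M count_space UNIV" G]
    by (simp add: pair_measure_countable o_def case_prod_beta')
  then have [measurable]: "case_prod \<Psi> \<in> borel_measurable (count_space UNIV \<Otimes>\<^sub>M iid_streams M)"
    unfolding \<Psi>_def by measurable
  have \<Psi>: "\<Psi> l \<eta> = Gb l * H \<eta>" for l \<eta>
    unfolding \<Psi>_def Gb_def H_def by (rule nn_integral_stake_sdrop_mult) measurable
  have "(\<integral>\<^sup>+\<omega>. G (stake i (fst \<omega>), stake j (snd \<omega>)) * h (sdrop i (fst \<omega>), sdrop j (snd \<omega>)) \<partial>iid_pairs M)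
      = (\<integral>\<^sup>+a. \<Psi> (stake i a) (sdrop i a) \<partial>iid_streams M)"
    unfolding \<Psi>_def by (subst nn_integral_fst[symmetric]) simp_all
  also have "\<dots> = (\<integral>\<^sup>+a. Gb (stake i a) \<partial>iid_streams M) * (\<integral>\<^sup>+\<eta>. H \<eta> \<partial>iid_streams M)"
    unfolding \<Psi> by (rule nn_integral_stake_sdrop_mult) measurable
  also have "\<dots> = (\<integral>\<^sup>+\<omega>. G (stake i (fst \<omega>), stake j (snd \<omega>)) \<partial>iid_pairs M) * integral\<^sup>N (iid_pairs M) h"
    unfolding Gb_def H_def by (subst (1 2) nn_integral_fst[symmetric]) simp_all
  finally show ?thesis .
qed

section \<open>First passage and the strong Markov property at common renewals\<close>

lemma sum_list_stake_add:
  "sum_list (stake (i + j) \<omega>) = sum_list (stake i \<omega>) + sum_list (stake j (sdrop i \<omega>))"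
  by (simp flip: stake_add)

lemma sum_list_stake_mono:
  fixes \<omega> :: "nat stream"
  assumes "i \<le> j"
  shows "sum_list (stake i \<omega>) \<le> sum_list (stake j \<omega>)"
  using sum_list_stake_add[of i "j - i" \<omega>] assms by simp

lemma zero_in_renewal_set0 [simp]: "0 \<in> renewal_set0 \<omega>"
  unfolding renewal_set0_def by (auto intro!: exI[of _ 0])

text \<open>Inter-arrival times may vanish, so several indices can reach the same renewal
  time; a renewal process is restarted after the first of them.\<close>

definition first_passage :: "nat \<Rightarrow> nat list \<Rightarrow> bool" where
  "first_passage s xs \<longleftrightarrow> sum_list xs = s \<and> (\<forall>k<length xs. sum_list (take k xs) \<noteq> s)"

definition prefix_sums :: "nat list \<Rightarrow> nat set" where
  "prefix_sums xs = {sum_list (take k xs) | k. k < length xs}"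

definition passage_index :: "nat \<Rightarrow> nat stream \<Rightarrow> nat" where
  "passage_index s \<omega> = (LEAST i. sum_list (stake i \<omega>) = s)"

lemma first_passage_stake_iff:
  "first_passage s (stake i \<omega>) \<longleftrightarrow> sum_list (stake i \<omega>) = s \<and> (\<forall>k<i. sum_list (stake k \<omega>) \<noteq> s)"
  by (auto simp: first_passage_def take_stake min_def)

lemma first_passage_stake_unique:
  "first_passage s (stake i \<omega>) \<Longrightarrow> first_passage s (stake j \<omega>) \<Longrightarrow> i = j"
  by (metis first_passage_stake_iff linorder_neqE_nat)

lemma passage_index_eqI: "first_passage s (stake i \<omega>) \<Longrightarrow> passage_index s \<omega> = i"
  unfolding passage_index_def
  by (rule Least_equality) (auto simp: first_passage_stake_iff not_less[symmetric])

lemma in_renewal_set0_iff_first_passage: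
  "s \<in> renewal_set0 \<omega> \<longleftrightarrow> (\<exists>i. first_passage s (stake i \<omega>))"
proof
  assume "s \<in> renewal_set0 \<omega>"
  then have "\<exists>i. sum_list (stake i \<omega>) = s"
    by (auto simp: renewal_set0_def)
  then have "sum_list (stake (passage_index s \<omega>) \<omega>) = s"
    unfolding passage_index_def by (rule LeastI_ex)
  moreover have "\<forall>k < passage_index s \<omega>. sum_list (stake k \<omega>) \<noteq> s"
    unfolding passage_index_def using not_less_Least by blast
  ultimately have "first_passage s (stake (passage_index s \<omega>) \<omega>)"
    by (simp add: first_passage_stake_iff)
  then show "\<exists>i. first_passage s (stake i \<omega>)" ..
qed (auto simp: renewal_set0_def first_passage_stake_iff)

lemma renewal_set0_below_first_passage:
  assumes "first_passage s (stake i \<omega>)"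
  shows "renewal_set0 \<omega> \<inter> {..<s} = prefix_sums (stake i \<omega>)"
proof (intro equalityI subsetI)
  fix x assume "x \<in> renewal_set0 \<omega> \<inter> {..<s}"
  then obtain k where k: "x = sum_list (stake k \<omega>)" "x < s"
    by (auto simp: renewal_set0_def)
  have "k < i"
  proof (rule ccontr)
    assume "\<not> k < i"
    then have "s \<le> x"
      using sum_list_stake_mono[of i k \<omega>] assms k by (simp add: first_passage_stake_iff)
    with k show False by simp
  qed
  then show "x \<in> prefix_sums (stake i \<omega>)"
    using k by (auto simp: prefix_sums_def take_stake min_def)
next
  fix x assume "x \<in> prefix_sums (stake i \<omega>)"
  then obtain k where "k < i" "x = sum_list (stake k \<omega>)"
    by (auto simp: prefix_sums_def take_stake min_def)
  moreover have "x \<le> s" "x \<noteq> s"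
    using sum_list_stake_mono[of k i \<omega>] assms calculation by (auto simp: first_passage_stake_iff)
  ultimately show "x \<in> renewal_set0 \<omega> \<inter> {..<s}"
    by (auto simp: renewal_set0_def)
qed

lemma renewal_set0_from_first_passage:
  assumes "first_passage s (stake i \<omega>)"
  shows "s + x \<in> renewal_set0 \<omega> \<longleftrightarrow> x \<in> renewal_set0 (sdrop i \<omega>)"
proof
  assume "s + x \<in> renewal_set0 \<omega>"
  then obtain k where k: "s + x = sum_list (stake k \<omega>)"
    by (auto simp: renewal_set0_def)
  have "i \<le> k"
  proof (rule ccontr)
    assume "\<not> i \<le> k"
    then have "sum_list (stake k \<omega>) \<le> s" "sum_list (stake k \<omega>) \<noteq> s"
      using sum_list_stake_mono[of k i \<omega>] assms by (auto simp: first_passage_stake_iff)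
    with k show False by simp
  qed
  then have "x = sum_list (stake (k - i) (sdrop i \<omega>))"
    using sum_list_stake_add[of i "k - i" \<omega>] assms k by (simp add: first_passage_stake_iff)
  then show "x \<in> renewal_set0 (sdrop i \<omega>)"
    by (auto simp: renewal_set0_def)
next
  assume "x \<in> renewal_set0 (sdrop i \<omega>)"
  then obtain j where "x = sum_list (stake j (sdrop i \<omega>))"
    by (auto simp: renewal_set0_def)
  then have "s + x = sum_list (stake (i + j) \<omega>)"
    using sum_list_stake_add[of i j \<omega>] assms by (simp add: first_passage_stake_iff)
  then show "s + x \<in> renewal_set0 \<omega>"
    by (auto simp: renewal_set0_def)
qed

definition common_renewals :: "nat stream \<times> nat stream \<Rightarrow> nat set" where
  "common_renewals \<omega> = renewal_set0 (fst \<omega>) \<inter> renewal_set0 (snd \<omega>)"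

definition restart :: "nat \<Rightarrow> nat stream \<times> nat stream \<Rightarrow> nat stream \<times> nat stream" where
  "restart s \<omega> = (sdrop (passage_index s (fst \<omega>)) (fst \<omega>), sdrop (passage_index s (snd \<omega>)) (snd \<omega>))"

lemma measurable_sum_list_stake [measurable]:
  fixes M :: "nat pmf"
  shows "(\<lambda>\<omega>. sum_list (stake i \<omega>)) \<in> measurable (iid_streams M) (count_space UNIV)"
  using measurable_compose[OF measurable_stake_iid[of i M], of sum_list] by (simp add: o_def)

lemma measurable_in_renewal_set0 [measurable]:
  "Measurable.pred (iid_streams M) (\<lambda>\<omega>. k \<in> renewal_set0 \<omega>)"
proof -
  have "(\<lambda>\<omega>. k \<in> renewal_set0 \<omega>) = (\<lambda>\<omega>. \<exists>i. sum_list (stake i \<omega>) = k)"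
    by (auto simp: renewal_set0_def)
  then show ?thesis by simp
qed

lemma measurable_in_common_renewals [measurable]:
  "Measurable.pred (iid_pairs M) (\<lambda>\<omega>. k \<in> common_renewals \<omega>)"
  unfolding common_renewals_def by measurable

lemma common_renewals_restart:
  assumes "s \<in> common_renewals \<omega>"
  shows "s + x \<in> common_renewals \<omega> \<longleftrightarrow> x \<in> common_renewals (restart s \<omega>)"
proof -
  obtain i j where i: "first_passage s (stake i (fst \<omega>))" and j: "first_passage s (stake j (snd \<omega>))"
    using assms by (auto simp: common_renewals_def in_renewal_set0_iff_first_passage)
  then have "restart s \<omega> = (sdrop i (fst \<omega>), sdrop j (snd \<omega>))"
    by (simp add: restart_def passage_index_eqI)
  then show ?thesis
    using renewal_set0_from_first_passage[OF i] renewal_set0_from_first_passage[OF j]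
    by (simp add: common_renewals_def)
qed

text \<open>Strong Markov property at a common renewal time s: seen from s, the pair of renewal
  processes is again distributed like the original pair and independent of the common
  renewals before s. Summing over the first-passage indices of both streams through s
  reduces this to the independence of prefix and suffix at fixed indices.\<close>

lemma restart_as_suminf:
  fixes s :: nat and g :: "nat set \<Rightarrow> ennreal" and h :: "nat stream \<times> nat stream \<Rightarrow> ennreal"
  defines "G \<equiv> \<lambda>(xs, ys). if first_passage s xs \<and> first_passage s ys
                 then g (prefix_sums xs \<inter> prefix_sums ys) else 0"
  shows "g (common_renewals \<omega> \<inter> {..<s}) * indicator {\<omega>. s \<in> common_renewals \<omega>} \<omega> * h (restart s \<omega>)
     = (\<Sum>i. \<Sum>j. G (stake i (fst \<omega>), stake j (snd \<omega>)) * h (sdrop i (fst \<omega>), sdrop j (snd \<omega>)))"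
proof (cases "s \<in> common_renewals \<omega>")
  case True
  then obtain i0 j0 where i0: "first_passage s (stake i0 (fst \<omega>))"
    and j0: "first_passage s (stake j0 (snd \<omega>))"
    by (auto simp: common_renewals_def in_renewal_set0_iff_first_passage)
  have inner: "(\<Sum>j. G (stake i (fst \<omega>), stake j (snd \<omega>)) * h (sdrop i (fst \<omega>), sdrop j (snd \<omega>)))
      = G (stake i (fst \<omega>), stake j0 (snd \<omega>)) * h (sdrop i (fst \<omega>), sdrop j0 (snd \<omega>))" for i
    by (subst suminf_finite[of "{j0}"]) (auto simp: G_def dest: first_passage_stake_unique[OF j0])
  have "common_renewals \<omega> \<inter> {..<s} = prefix_sums (stake i0 (fst \<omega>)) \<inter> prefix_sums (stake j0 (snd \<omega>))"
    using renewal_set0_below_first_passage[OF i0] renewal_set0_below_first_passage[OF j0]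
    by (auto simp: common_renewals_def)
  then show ?thesis
    unfolding inner using True i0 j0
    by (subst suminf_finite[of "{i0}"])
       (auto simp: G_def restart_def passage_index_eqI dest: first_passage_stake_unique[OF i0])
next
  case False
  then have "G (stake i (fst \<omega>), stake j (snd \<omega>)) = 0" for i j
    by (auto simp: G_def common_renewals_def in_renewal_set0_iff_first_passage)
  then show ?thesis
    using False by simp
qed

lemma nn_integral_restart:
  fixes g :: "nat set \<Rightarrow> ennreal"
  assumes h [measurable]: "h \<in> borel_measurable (iid_pairs M)"
  shows "(\<integral>\<^sup>+\<omega>. g (common_renewals \<omega> \<inter> {..<s}) * indicator {\<omega>. s \<in> common_renewals \<omega>} \<omega>
            * h (restart s \<omega>) \<partial>iid_pairs M)
       = (\<integral>\<^sup>+\<omega>. g (common_renewals \<omega> \<inter> {..<s}) * indicator {\<omega>. s \<in> common_renewals \<omega>} \<omega> \<partial>iid_pairs M)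
         * integral\<^sup>N (iid_pairs M) h"
proof -
  define G where "G = (\<lambda>(xs, ys). if first_passage s xs \<and> first_passage s ys
                         then g (prefix_sums xs \<inter> prefix_sums ys) else 0)"
  have [measurable]: "(\<lambda>\<omega>. h (sdrop i (fst \<omega>), sdrop j (snd \<omega>))) \<in> borel_measurable (iid_pairs M)"
    for i j by measurable
  have "(\<integral>\<^sup>+\<omega>. g (common_renewals \<omega> \<inter> {..<s}) * indicator {\<omega>. s \<in> common_renewals \<omega>} \<omega>
            * h (restart s \<omega>) \<partial>iid_pairs M)
      = (\<integral>\<^sup>+\<omega>. (\<Sum>i. \<Sum>j. G (stake i (fst \<omega>), stake j (snd \<omega>)) * h (sdrop i (fst \<omega>), sdrop j (snd \<omega>)))
            \<partial>iid_pairs M)"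
    unfolding G_def by (rule nn_integral_cong) (rule restart_as_suminf)
  also have "\<dots> = (\<Sum>i. \<Sum>j. (\<integral>\<^sup>+\<omega>. G (stake i (fst \<omega>), stake j (snd \<omega>)) \<partial>iid_pairs M)
                            * integral\<^sup>N (iid_pairs M) h)"
    by (simp add: nn_integral_suminf nn_integral_iid_pairs_stake_sdrop)
  also have "\<dots> = (\<integral>\<^sup>+\<omega>. (\<Sum>i. \<Sum>j. G (stake i (fst \<omega>), stake j (snd \<omega>))) \<partial>iid_pairs M)
                  * integral\<^sup>N (iid_pairs M) h"
    by (simp add: nn_integral_suminf)
  also have "(\<integral>\<^sup>+\<omega>. (\<Sum>i. \<Sum>j. G (stake i (fst \<omega>), stake j (snd \<omega>))) \<partial>iid_pairs M)
      = (\<integral>\<^sup>+\<omega>. g (common_renewals \<omega> \<inter> {..<s}) * indicator {\<omega>. s \<in> common_renewals \<omega>} \<omega> \<partial>iid_pairs M)"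
    using restart_as_suminf[where h="\<lambda>_. 1" and g=g and s=s] unfolding G_def
    by (intro nn_integral_cong) simp
  finally show ?thesis .
qed

section \<open>Contacts and the renewal equation\<close>

definition contacts :: "nat \<Rightarrow> nat stream \<times> nat stream \<Rightarrow> nat" where
  "contacts n \<omega> = card {k. k < n \<and> k \<in> common_renewals \<omega>}"

definition no_contact_in :: "nat \<Rightarrow> nat \<Rightarrow> nat stream \<times> nat stream \<Rightarrow> bool" where
  "no_contact_in n m \<omega> \<longleftrightarrow> (\<forall>k. n \<le> k \<and> k < n + m \<longrightarrow> k \<notin> common_renewals \<omega>)"

definition next_contact :: "nat \<Rightarrow> nat \<Rightarrow> nat stream \<times> nat stream \<Rightarrow> bool" where
  "next_contact n t \<omega> \<longleftrightarrow> n + t \<in> common_renewals \<omega> \<and> no_contact_in n t \<omega>"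

lemma real_contacts_eq_sum:
  "real (contacts n \<omega>) = (\<Sum>k<n. indicator {\<omega>. k \<in> common_renewals \<omega>} \<omega>)"
proof (induction n)
  case (Suc n)
  have "{k. k < Suc n \<and> k \<in> common_renewals \<omega>}
      = {k. k < n \<and> k \<in> common_renewals \<omega>} \<union> (if n \<in> common_renewals \<omega> then {n} else {})"
    by (auto simp: less_Suc_eq)
  then show ?case
    using Suc by (simp add: contacts_def indicator_def)
qed (simp add: contacts_def)

lemma measurable_contacts [measurable]:
  "(\<lambda>\<omega>. real (contacts n \<omega>)) \<in> borel_measurable (iid_pairs M)"
  unfolding real_contacts_eq_sum by measurable

lemma measurable_no_contact_in [measurable]: "Measurable.pred (iid_pairs M) (no_contact_in n m)"
  unfolding no_contact_in_def by measurable

lemma measurable_next_contact [measurable]: "Measurable.pred (iid_pairs M) (next_contact n t)"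
  unfolding next_contact_def by measurable

lemma contacts_le: "contacts n \<omega> \<le> n"
  using card_mono[of "{..<n}" "{k. k < n \<and> k \<in> common_renewals \<omega>}"] by (auto simp: contacts_def)

lemma contacts_mono: "n \<le> n' \<Longrightarrow> contacts n \<omega> \<le> contacts n' \<omega>"
  unfolding contacts_def by (rule card_mono) auto

lemma contacts_0 [simp]: "contacts 0 \<omega> = 0"
  by (simp add: contacts_def)

lemma contacts_1 [simp]: "contacts (Suc 0) \<omega> = 1"
proof -
  have "{k. k < 1 \<and> k \<in> common_renewals \<omega>} = {0}"
    by (auto simp: common_renewals_def)
  then show ?thesis by (simp add: contacts_def)
qed

lemma contacts_no_contact_in: "no_contact_in n t \<omega> \<Longrightarrow> contacts (n + t) \<omega> = contacts n \<omega>"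
  unfolding contacts_def no_contact_in_def by (metis not_le trans_less_add1)

lemma contacts_restart:
  assumes "s \<in> common_renewals \<omega>"
  shows "contacts (s + m) \<omega> = contacts s \<omega> + contacts m (restart s \<omega>)"
proof -
  let ?before = "{k. k < s \<and> k \<in> common_renewals \<omega>}"
  let ?after = "{j. j < m \<and> j \<in> common_renewals (restart s \<omega>)}"
  have split: "{k. k < s + m \<and> k \<in> common_renewals \<omega>} = ?before \<union> (+) s ` ?after"
  proof (intro equalityI subsetI)
    fix k assume k: "k \<in> {k. k < s + m \<and> k \<in> common_renewals \<omega>}"
    show "k \<in> ?before \<union> (+) s ` ?after"
    proof (cases "k < s")
      case False
      then have "k = s + (k - s)" by simp
      with k show ?thesis
        using common_renewals_restart[OF assms, of "k - s"] by (auto intro!: image_eqI[of _ _ "k - s"])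
    qed (use k in auto)
  qed (use common_renewals_restart[OF assms] in auto)
  have "card (?before \<union> (+) s ` ?after) = card ?before + card ((+) s ` ?after)"
    by (rule card_Un_disjoint) auto
  then show ?thesis
    unfolding contacts_def split by (simp add: card_image)
qed

lemma integrable_exp_contacts:
  fixes l :: real
  shows "integrable (iid_pairs M) (\<lambda>\<omega>. exp (l * contacts n \<omega>))"
proof -
  interpret prob_space "iid_pairs M" by (rule prob_space_iid_pairs)
  have "l * contacts n \<omega> \<le> \<bar>l\<bar> * n" for \<omega>
  proof -
    have "l * contacts n \<omega> \<le> \<bar>l\<bar> * contacts n \<omega>"
      by (intro mult_right_mono) simp_all
    also have "\<dots> \<le> \<bar>l\<bar> * n"
      using contacts_le[of n \<omega>] by (intro mult_left_mono) simp_all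
    finally show ?thesis .
  qed
  then have "\<bar>exp (l * contacts n \<omega>)\<bar> \<le> exp (\<bar>l\<bar> * n)" for \<omega>
    by simp
  then show ?thesis
    by (intro integrable_const_bound[where B="exp (\<bar>l\<bar> * n)"]) auto
qed

definition contact_mgf :: "nat pmf \<Rightarrow> real \<Rightarrow> nat \<Rightarrow> real" where
  "contact_mgf M l n = (\<integral>\<omega>. exp (l * contacts n \<omega>) \<partial>iid_pairs M)"

definition contact_mgf_on ::
    "nat pmf \<Rightarrow> real \<Rightarrow> nat \<Rightarrow> (nat stream \<times> nat stream \<Rightarrow> bool) \<Rightarrow> real" where
  "contact_mgf_on M l n P = (\<integral>\<omega>. exp (l * contacts n \<omega>) * indicator {\<omega>. P \<omega>} \<omega> \<partial>iid_pairs M)"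

lemma integrable_exp_contacts_on:
  fixes l :: real
  assumes "Measurable.pred (iid_pairs M) P"
  shows "integrable (iid_pairs M) (\<lambda>\<omega>. exp (l * contacts n \<omega>) * indicator {\<omega>. P \<omega>} \<omega>)"
  using sets_iid_pairs_Collect[OF assms] by (intro integrable_real_mult_indicator integrable_exp_contacts)

lemma contact_mgf_on_nonneg: "0 \<le> contact_mgf_on M l n P"
  unfolding contact_mgf_on_def by (intro integral_nonneg_AE) simp

lemma contact_mgf_nonneg: "0 \<le> contact_mgf M l n"
  unfolding contact_mgf_def by (intro integral_nonneg_AE) simp

lemma indicator_no_contact_in_plus_next_contact:
  "indicator {\<omega>. no_contact_in n m \<omega>} \<omega> + (\<Sum>t<m. indicator {\<omega>. next_contact n t \<omega>} \<omega>) = (1::real)"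
proof (induction m)
  case (Suc m)
  have "no_contact_in n (Suc m) \<omega> \<longleftrightarrow> no_contact_in n m \<omega> \<and> n + m \<notin> common_renewals \<omega>"
    by (auto simp: no_contact_in_def less_Suc_eq)
  then have "indicator {\<omega>. no_contact_in n (Suc m) \<omega>} \<omega> + indicator {\<omega>. next_contact n m \<omega>} \<omega>
      = (indicator {\<omega>. no_contact_in n m \<omega>} \<omega> :: real)"
    by (auto simp: next_contact_def indicator_def)
  then show ?case
    using Suc by simp
qed (auto simp: no_contact_in_def indicator_def)

lemma integral_split_next_contact:
  fixes f :: "nat stream \<times> nat stream \<Rightarrow> real"
  assumes f: "integrable (iid_pairs M) f"
  shows "(\<integral>\<omega>. f \<omega> \<partial>iid_pairs M)
       = (\<integral>\<omega>. f \<omega> * indicator {\<omega>. no_contact_in n m \<omega>} \<omega> \<partial>iid_pairs M)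
         + (\<Sum>t<m. \<integral>\<omega>. f \<omega> * indicator {\<omega>. next_contact n t \<omega>} \<omega> \<partial>iid_pairs M)"
proof -
  have sets: "{\<omega>. no_contact_in n m \<omega>} \<in> sets (iid_pairs M)" "{\<omega>. next_contact n t \<omega>} \<in> sets (iid_pairs M)"
    for t
    by (intro sets_iid_pairs_Collect measurable_no_contact_in measurable_next_contact)+
  have parts: "integrable (iid_pairs M) (\<lambda>\<omega>. f \<omega> * indicator {\<omega>. no_contact_in n m \<omega>} \<omega>)"
    "integrable (iid_pairs M) (\<lambda>\<omega>. f \<omega> * indicator {\<omega>. next_contact n t \<omega>} \<omega>)" for t
    by (rule integrable_real_mult_indicator[OF sets(1) f], rule integrable_real_mult_indicator[OF sets(2) f])
  have pointwise: "f \<omega> = f \<omega> * indicator {\<omega>. no_contact_in n m \<omega>} \<omega>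
              + (\<Sum>t<m. f \<omega> * indicator {\<omega>. next_contact n t \<omega>} \<omega>)" for \<omega>
  proof -
    have "f \<omega> = f \<omega> * (indicator {\<omega>. no_contact_in n m \<omega>} \<omega>
                          + (\<Sum>t<m. indicator {\<omega>. next_contact n t \<omega>} \<omega>))"
      by (simp only: indicator_no_contact_in_plus_next_contact mult_1_right)
    then show ?thesis
      by (simp only: distrib_left sum_distrib_left)
  qed
  have "(\<integral>\<omega>. f \<omega> \<partial>iid_pairs M)
      = (\<integral>\<omega>. f \<omega> * indicator {\<omega>. no_contact_in n m \<omega>} \<omega>
            + (\<Sum>t<m. f \<omega> * indicator {\<omega>. next_contact n t \<omega>} \<omega>) \<partial>iid_pairs M)"
    by (rule Bochner_Integration.integral_cong[OF refl pointwise])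
  also have "\<dots> = (\<integral>\<omega>. f \<omega> * indicator {\<omega>. no_contact_in n m \<omega>} \<omega> \<partial>iid_pairs M)
         + (\<Sum>t<m. \<integral>\<omega>. f \<omega> * indicator {\<omega>. next_contact n t \<omega>} \<omega> \<partial>iid_pairs M)"
  proof -
    have "integrable (iid_pairs M) (\<lambda>\<omega>. \<Sum>t<m. f \<omega> * indicator {\<omega>. next_contact n t \<omega>} \<omega>)"
      using parts(2) by (rule Bochner_Integration.integrable_sum)
    then show ?thesis
      by (simp only: Bochner_Integration.integral_add[OF parts(1)] Bochner_Integration.integral_sum[OF parts(2)])
  qed
  finally show ?thesis .
qed

lemma contacts_next_contact_restart:
  assumes "next_contact n t \<omega>" "t \<le> m"
  shows "contacts (n + m) \<omega> = contacts n \<omega> + contacts (m - t) (restart (n + t) \<omega>)"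
proof -
  have "contacts (n + m) \<omega> = contacts ((n + t) + (m - t)) \<omega>"
    using assms(2) by simp
  also have "\<dots> = contacts (n + t) \<omega> + contacts (m - t) (restart (n + t) \<omega>)"
    using assms(1) by (intro contacts_restart) (simp add: next_contact_def)
  finally show ?thesis
    using assms(1) contacts_no_contact_in[of n t \<omega>] by (simp add: next_contact_def)
qed

lemma nn_integral_exp_contacts:
  fixes l :: real
  shows "(\<integral>\<^sup>+\<omega>. ennreal (exp (l * contacts n \<omega>)) \<partial>iid_pairs M) = ennreal (contact_mgf M l n)"
  unfolding contact_mgf_def by (rule nn_integral_eq_integral[OF integrable_exp_contacts]) simp

lemma nn_integral_exp_contacts_on:
  fixes l :: real
  assumes "Measurable.pred (iid_pairs M) P"
  shows "(\<integral>\<^sup>+\<omega>. ennreal (exp (l * contacts n \<omega>) * indicator {\<omega>. P \<omega>} \<omega>) \<partial>iid_pairs M)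
       = ennreal (contact_mgf_on M l n P)"
  unfolding contact_mgf_on_def by (rule nn_integral_eq_integral[OF integrable_exp_contacts_on[OF assms]]) simp

lemma integral_next_contact_restart:
  fixes l :: real
  assumes "t < m"
  shows "(\<integral>\<omega>. exp (l * contacts (n + m) \<omega>) * indicator {\<omega>. next_contact n t \<omega>} \<omega> \<partial>iid_pairs M)
       = contact_mgf_on M l n (next_contact n t) * contact_mgf M l (m - t)"
proof -
  define s where "s = n + t"
  define g :: "nat set \<Rightarrow> ennreal" where
    "g D = ennreal (exp (l * card {k. k < n \<and> k \<in> D}) * of_bool (\<forall>k. n \<le> k \<and> k < s \<longrightarrow> k \<notin> D))" for D
  define h where "h = (\<lambda>\<omega>. ennreal (exp (l * contacts (m - t) \<omega>)))"
  have [measurable]: "h \<in> borel_measurable (iid_pairs M)"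
    unfolding h_def by measurable
  have past: "g (common_renewals \<omega> \<inter> {..<s}) * indicator {\<omega>. s \<in> common_renewals \<omega>} \<omega>
      = ennreal (exp (l * contacts n \<omega>) * indicator {\<omega>. next_contact n t \<omega>} \<omega>)" for \<omega>
  proof -
    have "{k. k < n \<and> k \<in> common_renewals \<omega> \<inter> {..<s}} = {k. k < n \<and> k \<in> common_renewals \<omega>}"
      by (auto simp: s_def)
    moreover have "(\<forall>k. n \<le> k \<and> k < s \<longrightarrow> k \<notin> common_renewals \<omega> \<inter> {..<s}) \<longleftrightarrow> no_contact_in n t \<omega>"
      by (auto simp: no_contact_in_def s_def)
    ultimately show ?thesis
      by (simp add: g_def contacts_def next_contact_def s_def split: split_indicator)
  qed
  have pointwise: "ennreal (exp (l * contacts (n + m) \<omega>) * indicator {\<omega>. next_contact n t \<omega>} \<omega>)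
      = g (common_renewals \<omega> \<inter> {..<s}) * indicator {\<omega>. s \<in> common_renewals \<omega>} \<omega> * h (restart s \<omega>)" for \<omega>
  proof (cases "next_contact n t \<omega>")
    case True
    then have "exp (l * contacts (n + m) \<omega>) = exp (l * contacts n \<omega>) * exp (l * contacts (m - t) (restart s \<omega>))"
      using contacts_next_contact_restart[of n t \<omega> m] assms by (simp add: s_def distrib_left exp_add)
    with True show ?thesis
      by (simp add: past h_def ennreal_mult)
  qed (simp add: past)
  have "ennreal (\<integral>\<omega>. exp (l * contacts (n + m) \<omega>) * indicator {\<omega>. next_contact n t \<omega>} \<omega> \<partial>iid_pairs M)
      = (\<integral>\<^sup>+\<omega>. ennreal (exp (l * contacts (n + m) \<omega>) * indicator {\<omega>. next_contact n t \<omega>} \<omega>) \<partial>iid_pairs M)"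
    by (rule nn_integral_eq_integral[OF integrable_exp_contacts_on[OF measurable_next_contact], symmetric]) simp
  also have "\<dots> = (\<integral>\<^sup>+\<omega>. g (common_renewals \<omega> \<inter> {..<s}) * indicator {\<omega>. s \<in> common_renewals \<omega>} \<omega>
                       * h (restart s \<omega>) \<partial>iid_pairs M)"
    by (simp only: pointwise)
  also have "\<dots> = (\<integral>\<^sup>+\<omega>. g (common_renewals \<omega> \<inter> {..<s}) * indicator {\<omega>. s \<in> common_renewals \<omega>} \<omega> \<partial>iid_pairs M)
                  * integral\<^sup>N (iid_pairs M) h"
    by (rule nn_integral_restart) measurable
  also have "\<dots> = ennreal (contact_mgf_on M l n (next_contact n t) * contact_mgf M l (m - t))"
    unfolding past h_def
    by (simp only: nn_integral_exp_contacts_on[OF measurable_next_contact] nn_integral_exp_contacts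
                   ennreal_mult[OF contact_mgf_on_nonneg contact_mgf_nonneg])
  finally show ?thesis
    by (rule ennreal_inj[THEN iffD1, rotated 2])
       (simp_all add: contact_mgf_on_nonneg contact_mgf_nonneg integral_nonneg_AE)
qed

lemma contact_mgf_split_next_contact:
  fixes l :: real
  shows "contact_mgf M l n
     = contact_mgf_on M l n (no_contact_in n m) + (\<Sum>t<m. contact_mgf_on M l n (next_contact n t))"
  unfolding contact_mgf_def contact_mgf_on_def
  by (rule integral_split_next_contact) (rule integrable_exp_contacts)

lemma contact_mgf_renewal_equation:
  fixes l :: real
  shows "contact_mgf M l (n + m)
     = contact_mgf_on M l n (no_contact_in n m)
       + (\<Sum>t<m. contact_mgf_on M l n (next_contact n t) * contact_mgf M l (m - t))"
proof -
  have "(\<integral>\<omega>. exp (l * contacts (n + m) \<omega>) * indicator {\<omega>. no_contact_in n m \<omega>} \<omega> \<partial>iid_pairs M)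
      = contact_mgf_on M l n (no_contact_in n m)"
    unfolding contact_mgf_on_def
    by (rule Bochner_Integration.integral_cong[OF refl]) (simp add: indicator_def contacts_no_contact_in)
  moreover have "contact_mgf M l (n + m)
      = (\<integral>\<omega>. exp (l * contacts (n + m) \<omega>) * indicator {\<omega>. no_contact_in n m \<omega>} \<omega> \<partial>iid_pairs M)
        + (\<Sum>t<m. \<integral>\<omega>. exp (l * contacts (n + m) \<omega>) * indicator {\<omega>. next_contact n t \<omega>} \<omega> \<partial>iid_pairs M)"
    unfolding contact_mgf_def by (rule integral_split_next_contact) (rule integrable_exp_contacts)
  ultimately show ?thesis
    by (simp add: integral_next_contact_restart)
qed

lemma contact_mgf_0 [simp]: "contact_mgf M l 0 = 1"
proof -
  interpret prob_space "iid_pairs M" by (rule prob_space_iid_pairs)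
  show ?thesis
    using prob_space by (simp add: contact_mgf_def)
qed

lemma contact_mgf_on_1:
  fixes l :: real
  assumes "Measurable.pred (iid_pairs M) P"
  shows "contact_mgf_on M l 1 P = exp l * measure (iid_pairs M) {\<omega>. P \<omega>}"
  using sets_iid_pairs_Collect[OF assms] by (simp add: contact_mgf_on_def)

lemma contact_mgf_1: "contact_mgf M l 1 = exp l"
  using contact_mgf_on_1[where P="\<lambda>_. True" and M=M and l=l] prob_space.prob_space[OF prob_space_iid_pairs]
  by (simp add: contact_mgf_def contact_mgf_on_def)

lemma contact_mgf_pos: "0 < contact_mgf M l n"
proof -
  interpret prob_space "iid_pairs M" by (rule prob_space_iid_pairs)
  have "exp (- \<bar>l\<bar> * n) \<le> exp (l * contacts n \<omega>)" for \<omega>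
  proof -
    have "- \<bar>l\<bar> * n \<le> - \<bar>l\<bar> * contacts n \<omega>"
      using contacts_le[of n \<omega>] by (intro mult_left_mono_neg) simp_all
    also have "\<dots> \<le> l * contacts n \<omega>"
      by (intro mult_right_mono) simp_all
    finally show ?thesis by simp
  qed
  then have "(\<integral>\<omega>. exp (- \<bar>l\<bar> * n) \<partial>iid_pairs M) \<le> contact_mgf M l n"
    unfolding contact_mgf_def by (intro integral_mono integrable_exp_contacts) auto
  then have "exp (- \<bar>l\<bar> * n) \<le> contact_mgf M l n"
    using prob_space by simp
  then show ?thesis
    by (rule less_le_trans[OF exp_gt_zero])
qed

lemma contact_mgf_mono:
  fixes l :: real
  assumes "0 \<le> l" "n \<le> n'"
  shows "contact_mgf M l n \<le> contact_mgf M l n'"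
  unfolding contact_mgf_def
  using assms by (intro integral_mono integrable_exp_contacts) (auto intro!: mult_left_mono contacts_mono)

lemma contact_mgf_antimono:
  fixes l :: real
  assumes "l \<le> 0" "n \<le> n'"
  shows "contact_mgf M l n' \<le> contact_mgf M l n"
  unfolding contact_mgf_def
  using assms by (intro integral_mono integrable_exp_contacts) (auto intro!: mult_left_mono_neg contacts_mono)

lemma contact_mgf_submult:
  fixes l :: real
  assumes "0 \<le> l"
  shows "contact_mgf M l (n + m) \<le> contact_mgf M l n * contact_mgf M l m"
proof -
  have "contact_mgf_on M l n (no_contact_in n m) \<le> contact_mgf_on M l n (no_contact_in n m) * contact_mgf M l m"
    using mult_left_mono[OF contact_mgf_mono[OF assms le0] contact_mgf_on_nonneg] by simp
  moreover have "contact_mgf_on M l n (next_contact n t) * contact_mgf M l (m - t)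
      \<le> contact_mgf_on M l n (next_contact n t) * contact_mgf M l m" for t
    using assms by (intro mult_left_mono contact_mgf_mono contact_mgf_on_nonneg) simp_all
  ultimately have "contact_mgf M l (n + m)
      \<le> contact_mgf_on M l n (no_contact_in n m) * contact_mgf M l m
        + (\<Sum>t<m. contact_mgf_on M l n (next_contact n t) * contact_mgf M l m)"
    unfolding contact_mgf_renewal_equation by (intro add_mono sum_mono)
  also have "\<dots> = contact_mgf M l n * contact_mgf M l m"
    by (subst contact_mgf_split_next_contact[of M l n m]) (simp add: distrib_right sum_distrib_right)
  finally show ?thesis .
qed

lemma contact_mgf_supermult:
  fixes l :: real
  assumes "l \<le> 0"
  shows "contact_mgf M l n * contact_mgf M l m \<le> contact_mgf M l (n + m)"
proof -
  have "contact_mgf M l n * contact_mgf M l m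
      = contact_mgf_on M l n (no_contact_in n m) * contact_mgf M l m
        + (\<Sum>t<m. contact_mgf_on M l n (next_contact n t) * contact_mgf M l m)"
    by (subst contact_mgf_split_next_contact[of M l n m]) (simp add: distrib_right sum_distrib_right)
  also have "\<dots> \<le> contact_mgf M l (n + m)"
  proof -
    have "contact_mgf_on M l n (no_contact_in n m) * contact_mgf M l m \<le> contact_mgf_on M l n (no_contact_in n m)"
      using mult_left_mono[OF contact_mgf_antimono[OF assms le0] contact_mgf_on_nonneg] by simp
    moreover have "contact_mgf_on M l n (next_contact n t) * contact_mgf M l m
        \<le> contact_mgf_on M l n (next_contact n t) * contact_mgf M l (m - t)" for t
      using assms by (intro mult_left_mono contact_mgf_antimono contact_mgf_on_nonneg) simp_all
    ultimately show ?thesis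
      unfolding contact_mgf_renewal_equation by (intro add_mono sum_mono)
  qed
  finally show ?thesis .
qed

section \<open>Growth of the moment generating function\<close>

lemma subadditive_iterate:
  fixes a :: "nat \<Rightarrow> real"
  assumes "\<And>n m. a (n + m) \<le> a n + a m"
  shows "a (q * m + r) \<le> q * a m + a r"
proof (induction q)
  case (Suc q)
  have "a (Suc q * m + r) \<le> a m + a (q * m + r)"
    using assms[of m "q * m + r"] by (simp add: add.assoc)
  with Suc show ?case
    by (simp add: algebra_simps)
qed simp

lemma subadditive_div_le:
  fixes a :: "nat \<Rightarrow> real"
  assumes sub: "\<And>n m. a (n + m) \<le> a n + a m" and nonneg: "\<And>n. 0 \<le> a n"
    and "1 \<le> m" "1 \<le> n"
  shows "a n / n \<le> a m / m + (\<Sum>r<m. a r) / n"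
proof -
  define q where "q = n div m"
  have "real (q * m) \<le> n"
    unfolding q_def of_nat_le_iff by (rule div_times_less_eq_dividend)
  have "a (n mod m) \<le> (\<Sum>r<m. a r)"
    using \<open>1 \<le> m\<close> by (intro member_le_sum) (auto simp: nonneg)
  then have "a n \<le> q * a m + (\<Sum>r<m. a r)"
    using subadditive_iterate[OF sub, of q m "n mod m"] by (simp add: q_def)
  then have "a n / n \<le> (q * m / n) * (a m / m) + (\<Sum>r<m. a r) / n"
    using assms(3,4) by (simp add: field_simps)
  also have "\<dots> \<le> a m / m + (\<Sum>r<m. a r) / n"
    using \<open>real (q * m) \<le> n\<close> assms(4) nonneg[of m]
    by (intro add_right_mono mult_left_le_one_le) (auto simp: divide_le_eq)
  finally show ?thesis .
qed

lemma fekete_convergent: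
  fixes a :: "nat \<Rightarrow> real"
  assumes sub: "\<And>n m. a (n + m) \<le> a n + a m" and nonneg: "\<And>n. 0 \<le> a n"
  shows "convergent (\<lambda>n. a n / n)"
proof -
  define L where "L = (INF n\<in>{1..}. a n / n)"
  have bdd: "bdd_below ((\<lambda>n. a n / n) ` {1..})"
    by (intro bdd_belowI[of _ 0]) (auto simp: nonneg)
  have L_le: "L \<le> a n / n" if "1 \<le> n" for n
    unfolding L_def using that bdd by (intro cINF_lower) auto
  have "(\<lambda>n. a n / n) \<longlonglongrightarrow> L"
  proof (rule LIMSEQ_I)
    fix \<epsilon> :: real assume "0 < \<epsilon>"
    then obtain m where m: "1 \<le> m" "a m / m < L + \<epsilon> / 2"
      using cINF_less_iff[OF _ bdd, of "L + \<epsilon> / 2"] by (auto simp: L_def)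
    define R where "R = (\<Sum>r<m. a r)"
    obtain N :: nat where N: "2 * R / \<epsilon> < N"
      using reals_Archimedean2 by blast
    have close: "L \<le> a n / n \<and> a n / n < L + \<epsilon>" if n: "max N 1 \<le> n" for n
    proof -
      have "2 * R < \<epsilon> * N"
        using N \<open>0 < \<epsilon>\<close> by (simp add: divide_less_eq mult.commute)
      also have "\<dots> \<le> \<epsilon> * n"
        using n \<open>0 < \<epsilon>\<close> by simp
      finally have "R / n < \<epsilon> / 2"
        using n by (simp add: divide_less_eq mult.commute)
      moreover have "a n / n \<le> a m / m + R / n"
        unfolding R_def using n by (intro subadditive_div_le[OF sub nonneg m(1)]) simp
      moreover have "L \<le> a n / n"
        using n by (intro L_le) simp
      ultimately show ?thesis
        using m(2) by linarith
    qed
    show "\<exists>N. \<forall>n\<ge>N. norm (a n / n - L) < \<epsilon>"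
    proof (intro exI[of _ "max N 1"] allI impI)
      fix n assume "max N 1 \<le> n"
      then show "norm (a n / n - L) < \<epsilon>"
        using close[of n] by simp
    qed
  qed
  then show ?thesis
    by (rule convergentI)
qed

lemma convergent_ln_contact_mgf:
  fixes l :: real
  shows "convergent (\<lambda>n. ln (contact_mgf M l n) / n)"
proof (cases "0 \<le> l")
  case True
  show ?thesis
  proof (rule fekete_convergent)
    show "ln (contact_mgf M l (n + m)) \<le> ln (contact_mgf M l n) + ln (contact_mgf M l m)" for n m
      using contact_mgf_submult[OF True] contact_mgf_pos by (simp add: ln_mult_pos flip: ln_le_cancel_iff)
    show "0 \<le> ln (contact_mgf M l n)" for n
      using contact_mgf_mono[OF True, of 0 n M] by simp
  qed
next
  case False
  have "convergent (\<lambda>n. - ln (contact_mgf M l n) / n)"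
  proof (rule fekete_convergent)
    show "- ln (contact_mgf M l (n + m)) \<le> - ln (contact_mgf M l n) + - ln (contact_mgf M l m)" for n m
      using contact_mgf_supermult[of l M n m] False contact_mgf_pos
      by (simp add: ln_mult_pos flip: ln_le_cancel_iff)
    show "0 \<le> - ln (contact_mgf M l n)" for n
      using contact_mgf_antimono[of l 0 n M] False contact_mgf_pos[of M l n] by simp
  qed
  then show ?thesis
    using convergent_minus_iff by fastforce
qed

lemma renewal_equation_exp_bound:
  fixes W A B :: "nat \<Rightarrow> real" and c F \<theta> C :: real
  assumes renewal: "\<And>m. W (Suc m) = A m + (\<Sum>t<m. B t * W (m - t))"
    and A: "\<And>m. A m \<le> c" and B: "\<And>t. 0 \<le> B t"
    and B_weighted: "\<And>m. (\<Sum>t<m. B t * exp (- F * Suc t)) \<le> \<theta>"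
    and F: "0 \<le> F" and \<theta>: "\<theta> \<le> 1" and C: "0 \<le> C" "W 0 \<le> C" and c: "c \<le> C * (1 - \<theta>)"
  shows "W n \<le> C * exp (F * n)"
proof (induction n rule: less_induct)
  case (less n)
  show ?case
  proof (cases n)
    case 0
    then show ?thesis
      using C by simp
  next
    case (Suc m)
    have "B t * W (m - t) \<le> C * exp (F * Suc m) * (B t * exp (- F * Suc t))" if "t < m" for t
    proof -
      have "exp (F * (m - t)) = exp (F * Suc m) * exp (- F * Suc t)"
        using that by (simp add: algebra_simps flip: exp_add)
      moreover have "B t * W (m - t) \<le> B t * (C * exp (F * (m - t)))"
        using less.IH[of "m - t"] Suc B by (intro mult_left_mono) auto
      ultimately show ?thesis
        by (simp only: ac_simps)
    qed
    then have "(\<Sum>t<m. B t * W (m - t)) \<le> (\<Sum>t<m. C * exp (F * Suc m) * (B t * exp (- F * Suc t)))"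
      by (intro sum_mono) simp
    also have "\<dots> = C * exp (F * Suc m) * (\<Sum>t<m. B t * exp (- F * Suc t))"
      by (simp only: sum_distrib_left)
    also have "\<dots> \<le> C * exp (F * Suc m) * \<theta>"
      using C by (intro mult_left_mono B_weighted) simp
    finally have "W (Suc m) \<le> c + C * exp (F * Suc m) * \<theta>"
      using renewal[of m] A[of m] by linarith
    also have "c \<le> C * (1 - \<theta>) * exp (F * Suc m)"
      using c mult_left_mono[of 1 "exp (F * Suc m)" "C * (1 - \<theta>)"] F C \<theta> by simp
    also have "C * (1 - \<theta>) * exp (F * Suc m) + C * exp (F * Suc m) * \<theta> = C * exp (F * Suc m)"
      by (simp add: algebra_simps)
    finally show ?thesis
      using Suc by simp
  qed
qed

lemma lim_ln_div_le:
  fixes W :: "nat \<Rightarrow> real"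
  assumes "convergent (\<lambda>n. ln (W n) / n)" and "\<And>n. 0 < W n" "0 < C"
    and bound: "\<And>n. W n \<le> C * exp (F * n)"
  shows "lim (\<lambda>n. ln (W n) / n) \<le> F"
proof -
  have "ln (W n) / n \<le> ln C / n + F" if "1 \<le> n" for n
  proof -
    have "ln (W n) \<le> ln C + F * n"
      using bound[of n] assms by (simp add: ln_mult_pos flip: ln_le_cancel_iff)
    then have "ln (W n) / n \<le> (ln C + F * n) / n"
      by (intro divide_right_mono) simp_all
    also have "\<dots> = ln C / n + F"
      using that by (simp add: field_simps)
    finally show ?thesis .
  qed
  then have "lim (\<lambda>n. ln (W n) / n) \<le> 0 + F"
    using assms(1)
    by (intro LIMSEQ_le[OF _ tendsto_add[OF lim_const_over_n tendsto_const]])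
       (auto simp: convergent_LIMSEQ_iff intro: exI[of _ 1])
  then show ?thesis
    by simp
qed

section \<open>Truncation\<close>

lemma sets_iid_streams: "sets (iid_streams M) = sets (stream_space (count_space UNIV))"
  by (rule sets_stream_space_cong) simp

lemma smap_sstart_sets:
  fixes f :: "'a \<Rightarrow> 'b::countable"
  shows "{\<omega>. smap f \<omega> \<in> sstart UNIV xs} \<in> sets (iid_streams M)"
proof -
  have "smap f -` sstart UNIV xs \<inter> space (iid_streams M) \<in> sets (iid_streams M)"
    by (rule measurable_sets[OF measurable_smap[of f _ "count_space UNIV"]]) (simp_all add: sets_sstart)
  then show ?thesis
    by (simp add: vimage_def)
qed

lemma emeasure_iid_streams_smap_sstart:
  fixes f :: "'a \<Rightarrow> 'b::countable"
  shows "emeasure (iid_streams M) {\<omega>. smap f \<omega> \<in> sstart UNIV xs}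
       = emeasure (iid_streams (map_pmf f M)) (sstart UNIV xs)"
proof (induction xs)
  case Nil
  show ?case
    using prob_space.emeasure_space_1[OF prob_space_iid_streams, of M]
      prob_space.emeasure_space_1[OF prob_space_iid_streams, of "map_pmf f M"]
    by simp
next
  case (Cons x xs)
  have "emeasure (iid_streams M) {\<omega>. smap f \<omega> \<in> sstart UNIV (x # xs)}
      = (\<integral>\<^sup>+y. emeasure (iid_streams M) {\<omega> \<in> space (iid_streams M). y ## \<omega> \<in> {\<omega>. smap f \<omega> \<in> sstart UNIV (x # xs)}} \<partial>M)"
    by (rule prob_space.emeasure_stream_space[OF measure_pmf.prob_space_axioms smap_sstart_sets])
  also have "\<dots> = (\<integral>\<^sup>+y. indicator {y. f y = x} y * emeasure (iid_streams M) {\<omega>. smap f \<omega> \<in> sstart UNIV xs} \<partial>M)"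
    by (intro nn_integral_cong) (auto simp: indicator_def)
  also have "\<dots> = (\<integral>\<^sup>+y. indicator {x} y * emeasure (iid_streams (map_pmf f M)) (sstart UNIV xs) \<partial>map_pmf f M)"
    by (simp add: Cons indicator_def)
  also have "\<dots> = (\<integral>\<^sup>+y. emeasure (iid_streams (map_pmf f M))
                    {\<omega> \<in> space (iid_streams (map_pmf f M)). y ## \<omega> \<in> sstart UNIV (x # xs)} \<partial>map_pmf f M)"
    by (intro nn_integral_cong) (auto simp: indicator_def)
  also have "\<dots> = emeasure (iid_streams (map_pmf f M)) (sstart UNIV (x # xs))"
    by (rule prob_space.emeasure_stream_space[OF measure_pmf.prob_space_axioms, symmetric])
       (simp add: sets_iid_streams sets_sstart)
  finally show ?case .
qed

lemma iid_streams_map_pmf: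
  fixes f :: "'a::countable \<Rightarrow> 'b::countable"
  shows "iid_streams (map_pmf f M) = distr (iid_streams M) (iid_streams (map_pmf f M)) (smap f)"
proof (rule stream_space_eq_sstart[of UNIV])
  have [measurable]: "smap f \<in> measurable (iid_streams M) (iid_streams (map_pmf f M))"
    by (rule measurable_smap) simp
  show "prob_space (distr (iid_streams M) (iid_streams (map_pmf f M)) (smap f))"
    by (rule prob_space.prob_space_distr[OF prob_space_iid_streams]) measurable
  show "emeasure (iid_streams (map_pmf f M)) (sstart UNIV xs)
      = emeasure (distr (iid_streams M) (iid_streams (map_pmf f M)) (smap f)) (sstart UNIV xs)" for xs
    by (subst emeasure_distr) (simp_all add: emeasure_iid_streams_smap_sstart sets_iid_streams sets_sstart vimage_def)
qed (simp_all add: prob_space_iid_streams sets_iid_streams)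

lemma iid_pairs_map_pmf:
  fixes f :: "'a::countable \<Rightarrow> 'b::countable"
  shows "iid_pairs (map_pmf f M) = distr (iid_pairs M) (iid_pairs (map_pmf f M)) (\<lambda>(x, y). (smap f x, smap f y))"
proof -
  have [measurable]: "smap f \<in> measurable (iid_streams M) (iid_streams (map_pmf f M))"
    by (rule measurable_smap) simp
  have "sigma_finite_measure (distr (iid_streams M) (iid_streams (map_pmf f M)) (smap f))"
    unfolding iid_streams_map_pmf[symmetric]
    by (rule prob_space_imp_sigma_finite[OF prob_space_iid_streams])
  then show ?thesis
    by (subst (1 2) iid_streams_map_pmf) (rule pair_measure_distr; measurable)
qed

lemma renewal_set0_smap_min:
  assumes "1 \<le> k" "k < tr" "k \<in> renewal_set0 (smap (\<lambda>n. min n tr) \<omega>)"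
  shows "k \<in> renewal_set_pos \<omega>"
proof -
  obtain i where i: "k = sum_list (map (\<lambda>n. min n tr) (stake i \<omega>))"
    using assms(3) by (auto simp: renewal_set0_def)
  with assms(1) obtain j where j: "i = Suc j"
    by (cases i) auto
  have "map (\<lambda>n. min n tr) (stake i \<omega>) = stake i \<omega>"
  proof (rule map_idI)
    fix x assume x: "x \<in> set (stake i \<omega>)"
    have "min x tr \<le> k"
      unfolding i by (rule member_le_sum_list) (use x in auto)
    then show "min x tr = x"
      using assms(2) by linarith
  qed
  then show ?thesis
    using i j by (auto simp: renewal_set_pos_def)
qed

lemma measurable_renewal_sets_meet:
  "Measurable.pred (iid_pairs M) (\<lambda>\<omega>. renewal_set_pos (fst \<omega>) \<inter> renewal_set_pos (snd \<omega>) \<noteq> {})"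
proof -
  have "(\<lambda>\<omega>. renewal_set_pos (fst \<omega>) \<inter> renewal_set_pos (snd \<omega>) \<noteq> {})
     = (\<lambda>\<omega>. \<exists>k::nat. (\<exists>i. sum_list (stake (Suc i) (fst \<omega>)) = k) \<and> (\<exists>j. sum_list (stake (Suc j) (snd \<omega>)) = k))"
    by (auto simp: renewal_set_pos_def fun_eq_iff)
  then show ?thesis
    by simp
qed

lemma prob_contact_before_trunc_le:
  "measure (iid_pairs (trunc_pmf K tr)) {\<omega>. \<not> no_contact_in 1 (tr - 1) \<omega>} \<le> p_intersect K"
proof -
  interpret prob_space "iid_pairs K" by (rule prob_space_iid_pairs)
  define f where "f = (\<lambda>n::nat. min n tr)"
  define \<phi> where "\<phi> = (\<lambda>(x, y). (smap f x, smap f y))"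
  define E where "E = {\<omega>. \<not> no_contact_in 1 (tr - 1) \<omega>}"
  have \<phi>: "\<phi> \<in> measurable (iid_pairs K) (iid_pairs (map_pmf f K))"
    unfolding \<phi>_def by measurable
  have E: "E \<in> sets (iid_pairs (map_pmf f K))"
    unfolding E_def by (rule sets_iid_pairs_Collect) measurable
  have "measure (iid_pairs (trunc_pmf K tr)) E = measure (distr (iid_pairs K) (iid_pairs (map_pmf f K)) \<phi>) E"
    unfolding trunc_pmf_def f_def[symmetric] \<phi>_def by (subst iid_pairs_map_pmf) (rule refl)
  also have "\<dots> = measure (iid_pairs K) (\<phi> -` E)"
    using measure_distr[OF \<phi> E] by simp
  also have "\<dots> \<le> measure (iid_pairs K) {\<omega>. renewal_set_pos (fst \<omega>) \<inter> renewal_set_pos (snd \<omega>) \<noteq> {}}"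
  proof (rule finite_measure_mono)
    show "{\<omega>. renewal_set_pos (fst \<omega>) \<inter> renewal_set_pos (snd \<omega>) \<noteq> {}} \<in> sets (iid_pairs K)"
      by (rule sets_iid_pairs_Collect[OF measurable_renewal_sets_meet])
    show "\<phi> -` E \<subseteq> {\<omega>. renewal_set_pos (fst \<omega>) \<inter> renewal_set_pos (snd \<omega>) \<noteq> {}}"
      using renewal_set0_smap_min[of _ tr]
      by (fastforce simp: E_def \<phi>_def f_def no_contact_in_def common_renewals_def)
  qed
  also have "\<dots> = p_intersect K"
    by (simp add: p_intersect_def two_renewals_def)
  finally show ?thesis
    by (simp add: E_def)
qed

lemma sum_contact_mgf_on_next_contact_1:
  fixes l :: real
  shows "(\<Sum>t<m. contact_mgf_on M l 1 (next_contact 1 t)) = exp l * measure (iid_pairs M) {\<omega>. \<not> no_contact_in 1 m \<omega>}"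
proof -
  interpret prob_space "iid_pairs M" by (rule prob_space_iid_pairs)
  have "{\<omega>. \<not> no_contact_in 1 m \<omega>} = space (iid_pairs M) - {\<omega>. no_contact_in 1 m \<omega>}"
    by auto
  then have "exp l * prob {\<omega>. \<not> no_contact_in 1 m \<omega>} = exp l - exp l * prob {\<omega>. no_contact_in 1 m \<omega>}"
    using prob_compl[OF sets_iid_pairs_Collect[OF measurable_no_contact_in]] by (simp add: right_diff_distrib)
  also have "\<dots> = contact_mgf M l 1 - contact_mgf_on M l 1 (no_contact_in 1 m)"
    by (simp only: contact_mgf_1 contact_mgf_on_1[OF measurable_no_contact_in])
  also have "\<dots> = (\<Sum>t<m. contact_mgf_on M l 1 (next_contact 1 t))"
    by (simp only: contact_mgf_split_next_contact[of M l 1 m] add_diff_cancel_left')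
  finally show ?thesis ..
qed

lemma damped_weight_le:
  fixes b C :: real and tr t :: nat
  assumes "0 \<le> b" "1 \<le> tr" "0 \<le> C"
  shows "b * exp (- (C / tr) * Suc t) \<le> (if t < tr - 1 then b else 0) + exp (- C) * b"
proof (cases "t < tr - 1")
  case True
  have "b * exp (- (C / tr) * Suc t) \<le> b"
    using assms by (intro mult_left_le) simp_all
  moreover have "0 \<le> exp (- C) * b"
    using assms by simp
  ultimately show ?thesis
    using True by simp
next
  case False
  then have "C * tr \<le> C * Suc t"
    using assms(3) by (intro mult_left_mono) linarith+
  then have "C \<le> C / tr * Suc t"
    using assms(2) by (simp add: field_simps)
  then have "b * exp (- (C / tr) * Suc t) \<le> b * exp (- C)"
    using assms(1) by (intro mult_left_mono) simp_all
  with False show ?thesis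
    by (simp add: mult.commute)
qed

lemma next_contact_weighted_sum_le:
  fixes l C :: real
  assumes "1 \<le> tr" "0 \<le> C"
  shows "(\<Sum>t<m. contact_mgf_on (trunc_pmf K tr) l 1 (next_contact 1 t) * exp (- (C / tr) * Suc t))
           \<le> exp l * (p_intersect K + exp (- C))"
proof -
  define B where "B t = contact_mgf_on (trunc_pmf K tr) l 1 (next_contact 1 t)" for t
  have B: "0 \<le> B t" for t
    unfolding B_def by (rule contact_mgf_on_nonneg)
  have sum_B: "(\<Sum>t<m. B t) \<le> exp l * measure (iid_pairs (trunc_pmf K tr)) {\<omega>. \<not> no_contact_in 1 m \<omega>}" for m
    unfolding B_def sum_contact_mgf_on_next_contact_1 ..
  have "B t * exp (- (C / tr) * Suc t) \<le> (if t < tr - 1 then B t else 0) + exp (- C) * B t" for t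
    using B assms by (rule damped_weight_le)
  then have "(\<Sum>t<m. B t * exp (- (C / tr) * Suc t))
      \<le> (\<Sum>t<m. (if t < tr - 1 then B t else 0) + exp (- C) * B t)"
    by (rule sum_mono)
  also have "\<dots> = (\<Sum>t\<in>{..<m} \<inter> {t. t < tr - 1}. B t) + exp (- C) * (\<Sum>t<m. B t)"
    by (simp add: sum.distrib sum_distrib_left sum.If_cases)
  also have "\<dots> \<le> exp l * p_intersect K + exp (- C) * exp l"
  proof (rule add_mono)
    have "(\<Sum>t\<in>{..<m} \<inter> {t. t < tr - 1}. B t) \<le> (\<Sum>t<tr - 1. B t)"
      using B by (intro sum_mono2) auto
    also have "\<dots> \<le> exp l * measure (iid_pairs (trunc_pmf K tr)) {\<omega>. \<not> no_contact_in 1 (tr - 1) \<omega>}"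
      by (rule sum_B)
    also have "\<dots> \<le> exp l * p_intersect K"
      by (intro mult_left_mono prob_contact_before_trunc_le) simp
    finally show "(\<Sum>t\<in>{..<m} \<inter> {t. t < tr - 1}. B t) \<le> exp l * p_intersect K" .
    have "(\<Sum>t<m. B t) \<le> exp l * measure (iid_pairs (trunc_pmf K tr)) {\<omega>. \<not> no_contact_in 1 m \<omega>}"
      by (rule sum_B)
    also have "\<dots> \<le> exp l"
      using prob_space.prob_le_1[OF prob_space_iid_pairs] by (intro mult_left_le) simp_all
    finally show "exp (- C) * (\<Sum>t<m. B t) \<le> exp (- C) * exp l"
      by (intro mult_left_mono) simp_all
  qed
  finally show ?thesis
    by (simp add: B_def algebra_simps)
qed

lemma contact_mgf_trunc_exp_bound:
  fixes l C :: real
  assumes tr: "1 \<le> tr" and C: "0 \<le> C" and margin: "exp l * (p_intersect K + exp (- C)) < 1"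
  obtains c where "0 < c" "\<And>n. contact_mgf (trunc_pmf K tr) l n \<le> c * exp (C / tr * n)"
proof -
  define Q where "Q = trunc_pmf K tr"
  define \<theta> where "\<theta> = exp l * (p_intersect K + exp (- C))"
  define c where "c = max 1 (exp l / (1 - \<theta>))"
  have "\<theta> < 1"
    using margin by (simp add: \<theta>_def)
  have "exp l = exp l / (1 - \<theta>) * (1 - \<theta>)"
    using \<open>\<theta> < 1\<close> by simp
  also have "\<dots> \<le> c * (1 - \<theta>)"
    using \<open>\<theta> < 1\<close> by (intro mult_right_mono) (simp_all add: c_def)
  finally have "exp l \<le> c * (1 - \<theta>)" .
  have "contact_mgf Q l n \<le> c * exp (C / tr * n)" for n
  proof (rule renewal_equation_exp_bound)
    show "contact_mgf Q l (Suc m)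
        = contact_mgf_on Q l 1 (no_contact_in 1 m) + (\<Sum>t<m. contact_mgf_on Q l 1 (next_contact 1 t) * contact_mgf Q l (m - t))"
      for m using contact_mgf_renewal_equation[of Q l 1 m] by simp
    show "contact_mgf_on Q l 1 (no_contact_in 1 m) \<le> exp l" for m
    proof -
      have "contact_mgf_on Q l 1 (no_contact_in 1 m) + (\<Sum>t<m. contact_mgf_on Q l 1 (next_contact 1 t)) = exp l"
        using contact_mgf_split_next_contact[of Q l 1 m] contact_mgf_1[of Q l] by simp
      moreover have "0 \<le> (\<Sum>t<m. contact_mgf_on Q l 1 (next_contact 1 t))"
        by (intro sum_nonneg contact_mgf_on_nonneg)
      ultimately show ?thesis
        by linarith
    qed
    show "(\<Sum>t<m. contact_mgf_on Q l 1 (next_contact 1 t) * exp (- (C / tr) * Suc t)) \<le> \<theta>" for m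
      unfolding Q_def \<theta>_def using tr C by (rule next_contact_weighted_sum_le)
    show "0 \<le> contact_mgf_on Q l 1 (next_contact 1 t)" for t
      by (rule contact_mgf_on_nonneg)
    show "0 \<le> C / tr" "\<theta> \<le> 1" "0 \<le> c" "contact_mgf Q l 0 \<le> c" "exp l \<le> c * (1 - \<theta>)"
      using C \<open>\<theta> < 1\<close> \<open>exp l \<le> c * (1 - \<theta>)\<close> by (simp_all add: c_def)
  qed
  moreover have "0 < c"
    by (simp add: c_def)
  ultimately show ?thesis
    using that by (simp add: Q_def)
qed

lemma f2_eq_lim_contact_mgf: "f2 K tr l = lim (\<lambda>n. ln (contact_mgf (trunc_pmf K tr) l n) / n)"
  unfolding f2_def contact_mgf_def contacts_def common_renewals_def two_renewals_def ..

lemma tr_f2_le: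
  fixes l C :: real
  assumes tr: "1 \<le> tr" and "0 \<le> C" "exp l * (p_intersect K + exp (- C)) < 1"
  shows "tr * f2 K tr l \<le> C"
proof -
  obtain c where "0 < c" "\<And>n. contact_mgf (trunc_pmf K tr) l n \<le> c * exp (C / tr * n)"
    using contact_mgf_trunc_exp_bound[OF assms] by blast
  then have "f2 K tr l \<le> C / tr"
    unfolding f2_eq_lim_contact_mgf
    by (intro lim_ln_div_le convergent_ln_contact_mgf contact_mgf_pos)
  then show ?thesis
    using tr by (simp add: field_simps)
qed

lemma exp_mult_p_intersect_lt_1:
  assumes "l < lambda0 K"
  shows "exp l * p_intersect K < 1"
proof (cases "p_intersect K = 0")
  case False
  then have "0 < p_intersect K"
    using measure_nonneg by (auto simp: p_intersect_def order.order_iff_strict)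
  moreover have "l + ln (p_intersect K) < 0"
    using assms by (simp add: lambda0_def)
  then have "exp (l + ln (p_intersect K)) < exp 0"
    by (rule exp_less_mono)
  ultimately show ?thesis
    by (simp add: exp_add)
qed simp

lemma exists_exp_margin:
  fixes l p :: real
  assumes "exp l * p < 1"
  obtains C where "0 \<le> C" "exp l * (p + exp (- C)) < 1"
proof -
  define d where "d = exp (- l) - p"
  have "0 < d"
    using assms by (simp add: d_def exp_minus field_simps)
  have "exp (- (\<bar>ln d\<bar> + 1)) < exp (ln d)"
    by simp
  then have "exp l * (p + exp (- (\<bar>ln d\<bar> + 1))) < exp l * (p + d)"
    using \<open>0 < d\<close> by simp
  also have "\<dots> = 1"
    by (simp add: d_def exp_minus)
  finally show ?thesis
    using that[of "\<bar>ln d\<bar> + 1"] by simp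
qed

theorem lemmaA1:
  fixes K :: "nat pmf"
  assumes K0: "pmf K 0 = 0"
    and tail: "\<exists>\<alpha>::real. \<alpha> \<ge> 0 \<and> ((\<lambda>n. ln (pmf K n) / ln (real n)) \<longlongrightarrow> - (1 + \<alpha>)) at_top"
    and lt1: "p_intersect K < 1"
  shows "\<forall>lam < lambda0 K. bdd_above {real tr * f2 K tr lam | tr. tr \<ge> 1}"
proof (intro allI impI)
  fix lam assume "lam < lambda0 K"
  then have "exp lam * p_intersect K < 1"
    by (rule exp_mult_p_intersect_lt_1)
  then obtain C where "0 \<le> C" "exp lam * (p_intersect K + exp (- C)) < 1"
    by (rule exists_exp_margin)
  then show "bdd_above {real tr * f2 K tr lam | tr. tr \<ge> 1}"
    by (intro bdd_aboveI[of _ C]) (auto intro: tr_f2_le)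
qed

end
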